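(* Let $0<\alpha<1$ and $p,q>0$. If $\mathrm{Tr}\,SG_{\alpha,p}(A,B)\le\mathrm{Tr}\,\mathcal{A}_{\alpha,q}(A,B)$ holds for all positive definite $2\times2$ matrices $A,B$, then $\min\{1,p/2\}\le q$.
   Context: For positive definite $A,B$: $A\#B:=A^{1/2}(A^{-1/2}BA^{-1/2})^{1/2}A^{1/2}$; $F_\alpha(A,B):=(A^{-1}\#B)^\alpha A(A^{-1}\#B)^\alpha$; $SG_{\alpha,p}(A,B):=F_\alpha(A^p,B^p)^{1/p}$; $\mathcal{A}_{\alpha,q}(A,B):=((1-\alpha)A^q+\alpha B^q)^{1/q}$. $\mathrm{Tr}$ is the usual trace. *)

theory Defs
  imports "HOL-Analysis.Analysis" "HOL-Library.Numeral_Type"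
begin

definition cadj :: "complex^'n^'n \<Rightarrow> complex^'n^'n" where
  "cadj A = (\<chi> i j. cnj (A $ j $ i))"

definition posdef :: "complex^'n^'n \<Rightarrow> bool" where
  "posdef A \<longleftrightarrow> cadj A = A \<and>
     (\<forall>x::complex^'n. x \<noteq> 0 \<longrightarrow> 0 < Re (\<Sum>i\<in>UNIV. cnj (x $ i) * (A *v x) $ i))"

definition unitary :: "complex^'n^'n \<Rightarrow> bool" where
  "unitary U \<longleftrightarrow> U ** cadj U = mat 1 \<and> cadj U ** U = mat 1"

definition rdiag :: "('n \<Rightarrow> real) \<Rightarrow> complex^'n^'n" where
  "rdiag d = (\<chi> i j. if i = j then complex_of_real (d i) else 0)"

definition mpow :: "complex^'n^'n \<Rightarrow> real \<Rightarrow> complex^'n^'n" where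
  "mpow A r = (SOME B. \<exists>U d. unitary U \<and> (\<forall>i. 0 < d i) \<and>
       A = U ** rdiag d ** cadj U \<and> B = U ** rdiag (\<lambda>i. d i powr r) ** cadj U)"

definition gmean :: "complex^'n^'n \<Rightarrow> complex^'n^'n \<Rightarrow> complex^'n^'n" where
  "gmean A B = mpow A (1/2) ** mpow (mpow A (-1/2) ** B ** mpow A (-1/2)) (1/2) ** mpow A (1/2)"

definition Falpha :: "real \<Rightarrow> complex^'n^'n \<Rightarrow> complex^'n^'n \<Rightarrow> complex^'n^'n" where
  "Falpha \<alpha> A B = mpow (gmean (matrix_inv A) B) \<alpha> ** A ** mpow (gmean (matrix_inv A) B) \<alpha>"

definition SG :: "real \<Rightarrow> real \<Rightarrow> complex^'n^'n \<Rightarrow> complex^'n^'n \<Rightarrow> complex^'n^'n" where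
  "SG \<alpha> p A B = mpow (Falpha \<alpha> (mpow A p) (mpow B p)) (1/p)"

definition AM :: "real \<Rightarrow> real \<Rightarrow> complex^'n^'n \<Rightarrow> complex^'n^'n \<Rightarrow> complex^'n^'n" where
  "AM \<alpha> q A B = mpow ((1 - \<alpha>) *\<^sub>R mpow A q + \<alpha> *\<^sub>R mpow B q) (1/q)"

end

theory Submission
  imports Defs "HOL-Real_Asymp.Real_Asymp"
begin

text \<open>Take \<open>A = diag(1, e)\<close> and \<open>B = R diag(1, e) R\<^sup>T\<close>, where the rotation \<open>R\<close> has first column
  \<open>(sech l, tanh l)\<close>, and let \<open>e \<rightarrow> 0\<close>. For \<open>2\<times>2\<close> matrices everything is explicit: real powers are
  affine in the matrix, square roots are given by \<open>(M + sqrt(det M) I) / sqrt(tr M + 2 sqrt(det M))\<close>,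
  and \<open>A\<^sup>-\<^sup>p # B\<^sup>p\<close> has determinant 1. Hence \<open>Tr SG\<^sub>\<alpha>\<^sub>,\<^sub>p(A, B)\<close> tends to
  \<open>(cosh((2\<alpha>-1) l) / cosh l)\<^sup>1\<^sup>/\<^sup>p\<close>, while \<open>Tr \<A>\<^sub>\<alpha>\<^sub>,\<^sub>q(A, B)\<close> tends to \<open>\<lambda>\<^sub>+\<^sup>1\<^sup>/\<^sup>q + \<lambda>\<^sub>-\<^sup>1\<^sup>/\<^sup>q\<close>
  for the eigenvalues \<open>\<lambda>\<^sub>\<plusminus>\<close> of a matrix with trace 1 and determinant \<open>\<alpha>(1-\<alpha>) tanh\<^sup>2 l\<close>.
  If \<open>q < 1\<close>, comparing the \<open>l\<^sup>2\<close>-terms of both limits as \<open>l \<rightarrow> 0\<close> gives \<open>p \<le> 2q\<close>.\<close>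

section \<open>Functional calculus of unitarily diagonalised matrices\<close>

lemma matrix_mul_rdiag_nth: "(X ** rdiag f) $ i $ j = X $ i $ j * complex_of_real (f j)"
  by (simp add: matrix_matrix_mult_def rdiag_def if_distrib[where f="\<lambda>x. _ * x"]
      cong: if_cong)

lemma rdiag_matrix_mul_nth: "(rdiag f ** X) $ i $ j = complex_of_real (f i) * X $ i $ j"
  by (simp add: matrix_matrix_mult_def rdiag_def if_distrib[where f="\<lambda>x. x * _"]
      cong: if_cong)

lemma rdiag_mult: "rdiag f ** rdiag g = rdiag (\<lambda>i. f i * g i)"
  by (simp add: vec_eq_iff matrix_mul_rdiag_nth) (simp add: rdiag_def)

text \<open>\<open>W = V\<^sup>* U\<close> satisfies \<open>W diag(d) = diag(e) W\<close>, so \<open>W\<^sub>i\<^sub>j \<noteq> 0\<close> forces \<open>d\<^sub>j = e\<^sub>i\<close>;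
  hence \<open>W\<close> also intertwines the powers. This makes \<open>mpow\<close> independent of the chosen
  diagonalisation.\<close>
lemma conj_rdiag_powr_eq:
  fixes U V :: "complex^'n^'n"
  assumes U: "unitary U" and V: "unitary V"
    and eq: "U ** rdiag d ** cadj U = V ** rdiag e ** cadj V"
  shows "U ** rdiag (\<lambda>i. d i powr r) ** cadj U = V ** rdiag (\<lambda>i. e i powr r) ** cadj V"
proof -
  define W where "W = cadj V ** U"
  have UU: "U ** cadj U = mat 1" "cadj U ** U = mat 1"
    and VV: "V ** cadj V = mat 1" "cadj V ** V = mat 1"
    using U V by (auto simp: unitary_def)
  have VV': "cadj V ** (V ** X) = X" "V ** (cadj V ** X) = X" for X :: "complex^'n^'n"
    by (simp_all add: matrix_mul_assoc VV)
  have "W ** rdiag d = cadj V ** (U ** rdiag d ** cadj U) ** U"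
    by (simp add: W_def matrix_mul_assoc[symmetric] UU)
  also have "\<dots> = rdiag e ** W"
    unfolding eq by (simp add: W_def matrix_mul_assoc[symmetric] VV')
  finally have WD: "W ** rdiag d = rdiag e ** W" .
  have WDr: "W ** rdiag (\<lambda>i. d i powr r) = rdiag (\<lambda>i. e i powr r) ** W"
  proof (rule vec_eq_iff[THEN iffD2, OF allI], rule vec_eq_iff[THEN iffD2, OF allI])
    fix i j
    have "W $ i $ j * complex_of_real (d j) = complex_of_real (e i) * W $ i $ j"
      using arg_cong[OF WD, of "\<lambda>X. X $ i $ j"] by (simp add: matrix_mul_rdiag_nth rdiag_matrix_mul_nth)
    then have "W $ i $ j = 0 \<or> d j = e i"
      by (auto simp: mult.commute)
    then show "(W ** rdiag (\<lambda>i. d i powr r)) $ i $ j = (rdiag (\<lambda>i. e i powr r) ** W) $ i $ j"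
      by (auto simp: matrix_mul_rdiag_nth rdiag_matrix_mul_nth mult.commute)
  qed
  have "U ** rdiag (\<lambda>i. d i powr r) ** cadj U = V ** (W ** rdiag (\<lambda>i. d i powr r)) ** cadj U"
    by (simp add: W_def matrix_mul_assoc[symmetric] VV')
  also have "\<dots> = V ** rdiag (\<lambda>i. e i powr r) ** (W ** cadj U)"
    by (simp add: WDr matrix_mul_assoc)
  also have "W ** cadj U = cadj V"
    by (simp add: W_def matrix_mul_assoc[symmetric] UU)
  finally show ?thesis .
qed

lemma mpow_eqI:
  fixes U :: "complex^'n^'n"
  assumes U: "unitary U" and d: "\<forall>i. 0 < d i" and M: "M = U ** rdiag d ** cadj U"
  shows "mpow M r = U ** rdiag (\<lambda>i. d i powr r) ** cadj U"
proof -
  let ?P = "\<lambda>B. \<exists>U d. unitary U \<and> (\<forall>i. 0 < d i) \<and>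
       M = U ** rdiag d ** cadj U \<and> B = U ** rdiag (\<lambda>i. d i powr r) ** cadj U"
  have "?P (mpow M r)"
    unfolding mpow_def by (rule someI[of ?P]) (use assms in blast)
  then obtain V e where "unitary V" "M = V ** rdiag e ** cadj V"
    and "mpow M r = V ** rdiag (\<lambda>i. e i powr r) ** cadj V"
    by blast
  with U M show ?thesis
    using conj_rdiag_powr_eq by metis
qed

lemma mpow_mult_mpow:
  fixes U :: "complex^'n^'n"
  assumes U: "unitary U" and d: "\<forall>i. 0 < d i" and M: "M = U ** rdiag d ** cadj U"
  shows "mpow M r ** mpow M s = mpow M (r + s)"
proof -
  have "cadj U ** U = mat 1" using U by (simp add: unitary_def)
  then have "mpow M r ** mpow M s = U ** (rdiag (\<lambda>i. d i powr r) ** rdiag (\<lambda>i. d i powr s)) ** cadj U"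
    by (simp add: mpow_eqI[OF assms] matrix_mul_assoc) (simp add: matrix_mul_assoc[symmetric])
  also have "\<dots> = mpow M (r + s)"
    using d by (simp add: mpow_eqI[OF assms] rdiag_mult powr_add)
  finally show ?thesis .
qed

lemma matrix_inv_eqI:
  fixes A B :: "'a::comm_ring_1^'n^'n"
  assumes "A ** B = mat 1" "B ** A = mat 1"
  shows "matrix_inv A = B"
proof -
  have inv: "A ** matrix_inv A = mat 1 \<and> matrix_inv A ** A = mat 1"
    unfolding matrix_inv_def by (rule someI[of _ B]) (use assms in blast)
  have "matrix_inv A = matrix_inv A ** (A ** B)"
    using assms by simp
  also have "\<dots> = B"
    using inv by (simp add: matrix_mul_assoc)
  finally show ?thesis .
qed

lemma tendsto_Re_trace:
  fixes M :: "'a \<Rightarrow> complex^'n^'n"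
  assumes "(M \<longlongrightarrow> M0) F"
  shows "((\<lambda>x. Re (trace (M x))) \<longlongrightarrow> Re (trace M0)) F"
  unfolding trace_def by (intro tendsto_intros assms)

section \<open>Symmetric \<open>2\<times>2\<close> matrices\<close>

definition mat2 :: "real \<Rightarrow> real \<Rightarrow> real \<Rightarrow> real \<Rightarrow> complex^2^2" where
  "mat2 a b c d = (\<chi> i j. complex_of_real
     (if i = 1 then (if j = 1 then a else b) else (if j = 1 then c else d)))"

lemma mat2_nth [simp]:
  "mat2 a b c d $ 1 $ 1 = a" "mat2 a b c d $ 1 $ 2 = b"
  "mat2 a b c d $ 2 $ 1 = c" "mat2 a b c d $ 2 $ 2 = d"
  by (simp_all add: mat2_def)

lemma mat2_eqI:
  fixes A B :: "'a^2^2"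
  assumes "A $ 1 $ 1 = B $ 1 $ 1" "A $ 1 $ 2 = B $ 1 $ 2" "A $ 2 $ 1 = B $ 2 $ 1" "A $ 2 $ 2 = B $ 2 $ 2"
  shows "A = B"
  using assms by (simp add: vec_eq_iff forall_2)

lemma mat2_eq_iff [simp]:
  "mat2 a b c d = mat2 a' b' c' d' \<longleftrightarrow> a = a' \<and> b = b' \<and> c = c' \<and> d = d'"
  by (metis mat2_nth of_real_eq_iff)

lemma mat2_mult [simp]:
  "mat2 a b c d ** mat2 a' b' c' d' =
     mat2 (a*a' + b*c') (a*b' + b*d') (c*a' + d*c') (c*b' + d*d')"
  by (rule mat2_eqI) (simp_all add: matrix_matrix_mult_def sum_2)

lemma mat2_add [simp]: "mat2 a b c d + mat2 a' b' c' d' = mat2 (a+a') (b+b') (c+c') (d+d')"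
  by (rule mat2_eqI) simp_all

lemma scaleR_mat2 [simp]: "r *\<^sub>R mat2 a b c d = mat2 (r*a) (r*b) (r*c) (r*d)"
  by (rule mat2_eqI) (simp_all add: scaleR_conv_of_real scaleR_vec_def)

lemma cadj_mat2 [simp]: "cadj (mat2 a b c d) = mat2 a c b d"
  by (rule mat2_eqI) (simp_all add: cadj_def)

lemma mat_1_eq_mat2: "mat 1 = mat2 1 0 0 1"
  by (rule mat2_eqI) (simp_all add: mat_def)

lemma trace_mat2 [simp]: "trace (mat2 a b c d) = complex_of_real (a + d)"
  by (simp add: trace_def sum_2)

lemma tendsto_mat2:
  assumes "(a \<longlongrightarrow> a0) F" "(b \<longlongrightarrow> b0) F" "(c \<longlongrightarrow> c0) F" "(d \<longlongrightarrow> d0) F"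
  shows "((\<lambda>x. mat2 (a x) (b x) (c x) (d x)) \<longlongrightarrow> mat2 a0 b0 c0 d0) F"
proof (intro vec_tendstoI)
  fix i j :: 2
  show "((\<lambda>x. mat2 (a x) (b x) (c x) (d x) $ i $ j) \<longlongrightarrow> mat2 a0 b0 c0 d0 $ i $ j) F"
    using exhaust_2[of i] exhaust_2[of j] by (auto intro!: tendsto_of_real assms)
qed

definition rot :: "real \<Rightarrow> real \<Rightarrow> complex^2^2" where
  "rot x y = mat2 x (-y) y x"

definition diag2 :: "real \<Rightarrow> real \<Rightarrow> 2 \<Rightarrow> real" where
  "diag2 f g = (\<lambda>i. if i = 1 then f else g)"

lemma diag2_simps [simp]: "diag2 f g 1 = f" "diag2 f g 2 = g"
  by (simp_all add: diag2_def)

lemma rdiag_diag2: "rdiag (diag2 f g) = mat2 f 0 0 g"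
  by (rule mat2_eqI) (simp_all add: rdiag_def)

lemma unitary_rot: "x\<^sup>2 + y\<^sup>2 = 1 \<Longrightarrow> unitary (rot x y)"
  by (simp add: unitary_def rot_def mat_1_eq_mat2 power2_eq_square algebra_simps)

lemma rot_conj_diag2:
  "rot x y ** rdiag (diag2 f g) ** cadj (rot x y) =
     mat2 (x\<^sup>2*f + y\<^sup>2*g) (x*y*(f - g)) (x*y*(f - g)) (y\<^sup>2*f + x\<^sup>2*g)"
  by (simp add: rot_def rdiag_diag2 power2_eq_square algebra_simps)

lemma rot_conj_diag2_affine:
  assumes "x\<^sup>2 + y\<^sup>2 = 1"
  shows "rot x y ** rdiag (diag2 (k*f + m) (k*g + m)) ** cadj (rot x y) =
     k *\<^sub>R (rot x y ** rdiag (diag2 f g) ** cadj (rot x y)) + m *\<^sub>R mat 1"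
  using assms by (simp add: rot_conj_diag2 mat_1_eq_mat2 algebra_simps)
    (simp add: distrib_left[symmetric])

lemma mpow_rot_conj_diag2:
  assumes "x\<^sup>2 + y\<^sup>2 = 1" "0 < f" "0 < g"
  shows "mpow (rot x y ** rdiag (diag2 f g) ** cadj (rot x y)) r =
     rot x y ** rdiag (diag2 (f powr r) (g powr r)) ** cadj (rot x y)"
proof -
  have "(\<lambda>i. diag2 f g i powr r) = diag2 (f powr r) (g powr r)"
    by (auto simp: diag2_def)
  moreover have "\<forall>i. 0 < diag2 f g i"
    using assms by (simp add: diag2_def)
  ultimately show ?thesis
    using mpow_eqI[OF unitary_rot[OF assms(1)]] by metis
qed

definition eig_max :: "real \<Rightarrow> real \<Rightarrow> real" where
  "eig_max T D = (T + sqrt (T\<^sup>2 - 4*D)) / 2"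

definition eig_min :: "real \<Rightarrow> real \<Rightarrow> real" where
  "eig_min T D = (T - sqrt (T\<^sup>2 - 4*D)) / 2"

definition eig_powr_sum :: "real \<Rightarrow> real \<Rightarrow> real \<Rightarrow> real" where
  "eig_powr_sum T D r = eig_max T D powr r + eig_min T D powr r"

lemma eig_max_add_eig_min: "eig_max T D + eig_min T D = T"
  unfolding eig_max_def eig_min_def by argo

lemma eig_max_mult_eig_min: "4*D \<le> T\<^sup>2 \<Longrightarrow> eig_max T D * eig_min T D = D"
  unfolding eig_max_def eig_min_def by (simp add: power2_eq_square algebra_simps)

lemma sym_discriminant: "(a + d :: real)\<^sup>2 - 4*(a*d - b\<^sup>2) = (a - d)\<^sup>2 + 4*b\<^sup>2"
  by (simp add: power2_eq_square algebra_simps)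

lemma eig_mat2_sum_prod:
  "eig_max (a + d) (a*d - b\<^sup>2) + eig_min (a + d) (a*d - b\<^sup>2) = a + d"
  "eig_max (a + d) (a*d - b\<^sup>2) * eig_min (a + d) (a*d - b\<^sup>2) = a*d - b\<^sup>2"
proof -
  have "4*(a*d - b\<^sup>2) \<le> (a + d)\<^sup>2"
    using sym_discriminant[of a d b] zero_le_power2[of "a - d"] zero_le_power2[of b] by linarith
  then show "eig_max (a + d) (a*d - b\<^sup>2) * eig_min (a + d) (a*d - b\<^sup>2) = a*d - b\<^sup>2"
    by (rule eig_max_mult_eig_min)
qed (rule eig_max_add_eig_min)

text \<open>\<open>(b, l1 - a)\<close> is an eigenvector for the eigenvalue \<open>l1\<close>; normalised, it gives the
  rotation.\<close>
lemma mat2_eq_rot_conj_eigvec: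
  assumes sum: "l1 + l2 = a + d" and prod: "l1 * l2 = a*d - b\<^sup>2" and n: "0 < b\<^sup>2 + (l1 - a)\<^sup>2"
  defines "x \<equiv> b / sqrt (b\<^sup>2 + (l1 - a)\<^sup>2)" and "y \<equiv> (l1 - a) / sqrt (b\<^sup>2 + (l1 - a)\<^sup>2)"
  shows "x\<^sup>2 + y\<^sup>2 = 1" "mat2 a b b d = rot x y ** rdiag (diag2 l1 l2) ** cadj (rot x y)"
proof -
  define n where "n = b\<^sup>2 + (l1 - a)\<^sup>2"
  have "(l1 - a) * (l2 - a) = l1*l2 - a*(l1 + l2) + a\<^sup>2"
    by (simp add: power2_eq_square algebra_simps)
  then have key: "(l1 - a) * (l2 - a) = - b\<^sup>2"
    by (simp add: sum prod power2_eq_square algebra_simps)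
  have n0: "0 < n" and "x = b / sqrt n" "y = (l1 - a) / sqrt n"
    using n by (simp_all only: n_def x_def y_def)
  then have x2: "x\<^sup>2 = b\<^sup>2 / n" and y2: "y\<^sup>2 = (l1 - a)\<^sup>2 / n" and xy: "x*y = b*(l1 - a) / n"
    by (simp_all add: power_divide power2_eq_square)
  show unit: "x\<^sup>2 + y\<^sup>2 = 1"
    using n0 unfolding x2 y2 add_divide_distrib[symmetric] n_def[symmetric] by simp
  have "b\<^sup>2*l1 + (l1 - a)\<^sup>2*l2 - a*n = (l1 - a) * (b\<^sup>2 + (l1 - a)*(l2 - a))"
    by (simp add: n_def power2_eq_square algebra_simps)
  then have "b\<^sup>2*l1 + (l1 - a)\<^sup>2*l2 = a*n"
    by (simp add: key)
  then have e1: "x\<^sup>2*l1 + y\<^sup>2*l2 = a"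
    using n0 by (simp add: x2 y2 add_divide_distrib[symmetric])
  have "(l1 - a)*(l1 - l2) - n = - (b\<^sup>2 + (l1 - a)*(l2 - a))"
    by (simp add: n_def power2_eq_square algebra_simps)
  then have "(l1 - a)*(l1 - l2) = n"
    by (simp add: key)
  then have e2: "x*y*(l1 - l2) = b"
    using n0 by (simp add: xy mult.assoc)
  have "y\<^sup>2*l1 + x\<^sup>2*l2 = (x\<^sup>2 + y\<^sup>2)*(l1 + l2) - (x\<^sup>2*l1 + y\<^sup>2*l2)"
    by (simp add: algebra_simps)
  then have e3: "y\<^sup>2*l1 + x\<^sup>2*l2 = d"
    using unit sum e1 by simp
  show "mat2 a b b d = rot x y ** rdiag (diag2 l1 l2) ** cadj (rot x y)"
    by (simp add: rot_conj_diag2 e1 e2 e3)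
qed

lemma mat2_sym_spectral:
  obtains x y where "x\<^sup>2 + y\<^sup>2 = 1"
    "mat2 a b b d = rot x y ** rdiag (diag2 (eig_max (a + d) (a*d - b\<^sup>2))
       (eig_min (a + d) (a*d - b\<^sup>2))) ** cadj (rot x y)"
proof -
  define l1 where "l1 = eig_max (a + d) (a*d - b\<^sup>2)"
  define l2 where "l2 = eig_min (a + d) (a*d - b\<^sup>2)"
  have sum: "l1 + l2 = a + d" and prod: "l1 * l2 = a*d - b\<^sup>2"
    unfolding l1_def l2_def by (rule eig_mat2_sum_prod)+
  show ?thesis
  proof (cases "b\<^sup>2 + (l1 - a)\<^sup>2 = 0")
    case True
    then have "b = 0" "l1 = a" "l2 = d"
      using sum by (simp_all add: add_nonneg_eq_0_iff)
    then show ?thesis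
      using that[of 1 0] by (simp add: rot_conj_diag2 l1_def l2_def)
  next
    case False
    then have "0 < b\<^sup>2 + (l1 - a)\<^sup>2"
      by (simp add: order_less_le)
    then show ?thesis
      using that mat2_eq_rot_conj_eigvec[OF sum prod] unfolding l1_def l2_def by blast
  qed
qed

lemma eig_mat2_pos:
  assumes "0 < a" "b\<^sup>2 < a*d"
  shows "0 < eig_min (a + d) (a*d - b\<^sup>2)" "eig_min (a + d) (a*d - b\<^sup>2) \<le> eig_max (a + d) (a*d - b\<^sup>2)"
proof -
  let ?l1 = "eig_max (a + d) (a*d - b\<^sup>2)" and ?l2 = "eig_min (a + d) (a*d - b\<^sup>2)"
  show le: "?l2 \<le> ?l1"
    unfolding eig_max_def eig_min_def sym_discriminant by simp
  have "0 < d"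
    using assms by (smt (verit) mult_nonpos_nonneg zero_le_power2 mult_nonneg_nonpos)
  then have "0 < ?l1 * ?l2" "0 < ?l1 + ?l2"
    using assms by (simp_all add: eig_mat2_sum_prod)
  with le show "0 < ?l2"
    by (smt (verit) mult_nonneg_nonpos)
qed

lemma quadratic_form_pos:
  fixes a b d u w :: real
  assumes "0 < a" "b\<^sup>2 < a*d"
  shows "0 \<le> a*u\<^sup>2 + 2*b*u*w + d*w\<^sup>2" and "u \<noteq> 0 \<or> w \<noteq> 0 \<Longrightarrow> 0 < a*u\<^sup>2 + 2*b*u*w + d*w\<^sup>2"
proof -
  have a_times: "a * (a*u\<^sup>2 + 2*b*u*w + d*w\<^sup>2) = (a*u + b*w)\<^sup>2 + (a*d - b\<^sup>2)*w\<^sup>2"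
    by (simp add: power2_eq_square algebra_simps)
  have "0 \<le> a * (a*u\<^sup>2 + 2*b*u*w + d*w\<^sup>2)"
    unfolding a_times using assms by simp
  with \<open>0 < a\<close> show "0 \<le> a*u\<^sup>2 + 2*b*u*w + d*w\<^sup>2"
    by (simp add: zero_le_mult_iff)
  assume "u \<noteq> 0 \<or> w \<noteq> 0"
  then have "0 < a * (a*u\<^sup>2 + 2*b*u*w + d*w\<^sup>2)"
    unfolding a_times using assms by (cases "w = 0") (simp_all add: add_nonneg_pos)
  with \<open>0 < a\<close> show "0 < a*u\<^sup>2 + 2*b*u*w + d*w\<^sup>2"
    by (simp add: zero_less_mult_iff)
qed

lemma posdef_mat2:
  assumes a: "0 < a" and det: "b\<^sup>2 < a*d"
  shows "posdef (mat2 a b b d)"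
  unfolding posdef_def
proof (intro conjI allI impI)
  show "cadj (mat2 a b b d) = mat2 a b b d" by simp
  fix z :: "complex^2"
  assume "z \<noteq> 0"
  then have "Re (z$1) \<noteq> 0 \<or> Re (z$2) \<noteq> 0 \<or> Im (z$1) \<noteq> 0 \<or> Im (z$2) \<noteq> 0"
    by (auto simp: vec_eq_iff forall_2 complex_eq_iff)
  then have "0 < a*(Re (z$1))\<^sup>2 + 2*b*Re (z$1)*Re (z$2) + d*(Re (z$2))\<^sup>2 +
                (a*(Im (z$1))\<^sup>2 + 2*b*Im (z$1)*Im (z$2) + d*(Im (z$2))\<^sup>2)"
    using quadratic_form_pos[OF a det] by (meson add_nonneg_pos add_pos_nonneg)
  then show "0 < Re (\<Sum>i\<in>UNIV. cnj (z $ i) * (mat2 a b b d *v z) $ i)"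
    by (simp add: sum_2 matrix_vector_mult_def power2_eq_square algebra_simps)
qed

lemma mpow_mat2_rot_conj:
  assumes "0 < a" "b\<^sup>2 < a*d"
  obtains x y where "x\<^sup>2 + y\<^sup>2 = 1"
    "mpow (mat2 a b b d) r = rot x y ** rdiag (diag2 (eig_max (a + d) (a*d - b\<^sup>2) powr r)
       (eig_min (a + d) (a*d - b\<^sup>2) powr r)) ** cadj (rot x y)"
proof -
  obtain x y where xy: "x\<^sup>2 + y\<^sup>2 = 1" and M: "mat2 a b b d = rot x y ** rdiag (diag2
      (eig_max (a + d) (a*d - b\<^sup>2)) (eig_min (a + d) (a*d - b\<^sup>2))) ** cadj (rot x y)"
    by (rule mat2_sym_spectral)
  have "0 < eig_max (a + d) (a*d - b\<^sup>2)" "0 < eig_min (a + d) (a*d - b\<^sup>2)"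
    using eig_mat2_pos[OF assms] by linarith+
  then show ?thesis
    using that[OF xy] by (simp add: M mpow_rot_conj_diag2[OF xy])
qed

lemma trace_mpow_mat2:
  assumes "0 < a" "b\<^sup>2 < a*d"
  shows "Re (trace (mpow (mat2 a b b d) r)) = eig_powr_sum (a + d) (a*d - b\<^sup>2) r"
proof -
  obtain x y where xy: "x\<^sup>2 + y\<^sup>2 = 1" and M: "mpow (mat2 a b b d) r = rot x y ** rdiag
      (diag2 (eig_max (a + d) (a*d - b\<^sup>2) powr r) (eig_min (a + d) (a*d - b\<^sup>2) powr r)) ** cadj (rot x y)"
    using mpow_mat2_rot_conj[OF assms] .
  have "x\<^sup>2*f + y\<^sup>2*g + (y\<^sup>2*f + x\<^sup>2*g) = f + g" for f g :: real
    using xy by (simp add: algebra_simps) (simp add: distrib_left[symmetric])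
  then show ?thesis
    by (simp add: M rot_conj_diag2 eig_powr_sum_def)
qed

lemma mpow_mat2_entries:
  assumes "0 < a" "b\<^sup>2 < a*d"
  obtains k1 k2 k3 where "mpow (mat2 a b b d) r = mat2 k1 k2 k2 k3" "0 < k1" "0 < k3"
    "k1*k3 - k2\<^sup>2 = (a*d - b\<^sup>2) powr r"
proof -
  let ?l1 = "eig_max (a + d) (a*d - b\<^sup>2)" and ?l2 = "eig_min (a + d) (a*d - b\<^sup>2)"
  obtain x y where xy: "x\<^sup>2 + y\<^sup>2 = 1" and M: "mpow (mat2 a b b d) r =
      rot x y ** rdiag (diag2 (?l1 powr r) (?l2 powr r)) ** cadj (rot x y)"
    using mpow_mat2_rot_conj[OF assms] .
  have l: "0 < ?l1" "0 < ?l2"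
    using eig_mat2_pos[OF assms] by linarith+
  have "0 < x\<^sup>2*f + y\<^sup>2*g" "0 < y\<^sup>2*f + x\<^sup>2*g" if "0 < f" "0 < g" for f g :: real
    using xy that by (smt (verit) mult_pos_pos mult_nonneg_nonneg zero_le_power2)+
  moreover have "(x\<^sup>2*f + y\<^sup>2*g) * (y\<^sup>2*f + x\<^sup>2*g) - (x*y*(f - g))\<^sup>2 = f*g*(x\<^sup>2 + y\<^sup>2)\<^sup>2" for f g :: real
    by (simp add: power2_eq_square algebra_simps)
  moreover have "?l1 powr r * ?l2 powr r = (a*d - b\<^sup>2) powr r"
    using l by (simp add: powr_mult[symmetric] eig_mat2_sum_prod)
  ultimately show ?thesis
    using that xy l by (simp add: M rot_conj_diag2)
qed

lemma mpow_mult_mpow_mat2: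
  assumes "0 < a" "b\<^sup>2 < a*d"
  shows "mpow (mat2 a b b d) r ** mpow (mat2 a b b d) s = mpow (mat2 a b b d) (r + s)"
proof -
  obtain x y where xy: "x\<^sup>2 + y\<^sup>2 = 1" and M: "mat2 a b b d = rot x y ** rdiag (diag2
      (eig_max (a + d) (a*d - b\<^sup>2)) (eig_min (a + d) (a*d - b\<^sup>2))) ** cadj (rot x y)"
    by (rule mat2_sym_spectral)
  have "\<forall>i. 0 < diag2 (eig_max (a + d) (a*d - b\<^sup>2)) (eig_min (a + d) (a*d - b\<^sup>2)) i"
    using eig_mat2_pos[OF assms] by (auto simp: diag2_def)
  then show ?thesis
    by (rule mpow_mult_mpow[OF unitary_rot[OF xy] _ M])
qed

lemma mpow_mat2_affine:
  assumes "0 < a" "b\<^sup>2 < a*d"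
    and "eig_max (a + d) (a*d - b\<^sup>2) powr r = k * eig_max (a + d) (a*d - b\<^sup>2) + m"
    and "eig_min (a + d) (a*d - b\<^sup>2) powr r = k * eig_min (a + d) (a*d - b\<^sup>2) + m"
  shows "mpow (mat2 a b b d) r = k *\<^sub>R mat2 a b b d + m *\<^sub>R mat 1"
proof -
  obtain x y where xy: "x\<^sup>2 + y\<^sup>2 = 1" and M: "mat2 a b b d = rot x y ** rdiag (diag2
      (eig_max (a + d) (a*d - b\<^sup>2)) (eig_min (a + d) (a*d - b\<^sup>2))) ** cadj (rot x y)"
    by (rule mat2_sym_spectral)
  have "0 < eig_max (a + d) (a*d - b\<^sup>2)" "0 < eig_min (a + d) (a*d - b\<^sup>2)"
    using eig_mat2_pos[OF assms(1,2)] by linarith+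
  then have "mpow (mat2 a b b d) r = rot x y ** rdiag (diag2
      (eig_max (a + d) (a*d - b\<^sup>2) powr r) (eig_min (a + d) (a*d - b\<^sup>2) powr r)) ** cadj (rot x y)"
    unfolding M by (rule mpow_rot_conj_diag2[OF xy])
  then show ?thesis
    unfolding assms(3,4) rot_conj_diag2_affine[OF xy] M[symmetric] .
qed

definition chord_slope :: "real \<Rightarrow> real \<Rightarrow> real \<Rightarrow> real" where
  "chord_slope r x y = (x powr r - y powr r) / (x - y)"

definition chord_icept :: "real \<Rightarrow> real \<Rightarrow> real \<Rightarrow> real" where
  "chord_icept r x y = (x * y powr r - y * x powr r) / (x - y)"

lemma chord_interp:
  assumes "x \<noteq> y"
  shows "x powr r = chord_slope r x y * x + chord_icept r x y"
    and "y powr r = chord_slope r x y * y + chord_icept r x y"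
proof -
  have "x - y \<noteq> 0" using assms by simp
  then show "x powr r = chord_slope r x y * x + chord_icept r x y"
    "y powr r = chord_slope r x y * y + chord_icept r x y"
    unfolding chord_slope_def chord_icept_def by (simp_all add: divide_simps) (simp_all add: algebra_simps)
qed

lemma mpow_mat2_interp:
  assumes "0 < a" "b\<^sup>2 < a*d" "(a - d)\<^sup>2 + 4*b\<^sup>2 \<noteq> 0"
  defines "l1 \<equiv> eig_max (a + d) (a*d - b\<^sup>2)" and "l2 \<equiv> eig_min (a + d) (a*d - b\<^sup>2)"
  shows "mpow (mat2 a b b d) r = chord_slope r l1 l2 *\<^sub>R mat2 a b b d + chord_icept r l1 l2 *\<^sub>R mat 1"
proof -
  have "l1 - l2 = sqrt ((a - d)\<^sup>2 + 4*b\<^sup>2)"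
    unfolding l1_def l2_def eig_max_def eig_min_def sym_discriminant by argo
  then have "l1 \<noteq> l2"
    using assms(3) by auto
  then show ?thesis
    unfolding l1_def l2_def by (intro mpow_mat2_affine assms(1,2) chord_interp)
qed

text \<open>Both eigenvalues satisfy \<open>sqrt l * \<tau> = l + \<sigma>\<close>.\<close>
lemma mpow_mat2_sqrt:
  assumes "0 < a" "b\<^sup>2 < a*d"
  defines "\<sigma> \<equiv> sqrt (a*d - b\<^sup>2)"
  defines "\<tau> \<equiv> sqrt (a + d + 2*\<sigma>)"
  shows "mpow (mat2 a b b d) (1/2) = (1/\<tau>) *\<^sub>R mat2 a b b d + (\<sigma>/\<tau>) *\<^sub>R mat 1"
proof (rule mpow_mat2_affine[OF assms(1,2)])
  let ?l1 = "eig_max (a + d) (a*d - b\<^sup>2)" and ?l2 = "eig_min (a + d) (a*d - b\<^sup>2)"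
  have l: "0 < ?l1" "0 < ?l2"
    using eig_mat2_pos[OF assms(1,2)] by linarith+
  have \<sigma>: "\<sigma> = sqrt ?l1 * sqrt ?l2"
    using eig_mat2_sum_prod(2)[of a d b] unfolding \<sigma>_def by (simp add: real_sqrt_mult[symmetric])
  have "(sqrt ?l1 + sqrt ?l2)\<^sup>2 = ?l1 + ?l2 + 2*\<sigma>"
    using l by (simp add: \<sigma> power2_eq_square algebra_simps)
  also have "?l1 + ?l2 = a + d"
    by (rule eig_mat2_sum_prod(1))
  finally have "(sqrt ?l1 + sqrt ?l2)\<^sup>2 = a + d + 2*\<sigma>" .
  then have \<tau>: "\<tau> = sqrt ?l1 + sqrt ?l2"
    unfolding \<tau>_def by (rule real_sqrt_unique) (use l in simp)
  have "0 < \<tau>"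
    using l by (simp add: \<tau> add_pos_pos)
  have "sqrt l * \<tau> = l + \<sigma>" if "l = ?l1 \<or> l = ?l2" for l
    using that l by (auto simp: \<sigma> \<tau> algebra_simps)
  then have "l powr (1/2) = 1/\<tau> * l + \<sigma>/\<tau>" if "l = ?l1 \<or> l = ?l2" for l
    using that l \<open>0 < \<tau>\<close> by (auto simp: powr_half_sqrt add_divide_distrib[symmetric] eq_divide_eq)
  then show "?l1 powr (1/2) = 1/\<tau> * ?l1 + \<sigma>/\<tau>" "?l2 powr (1/2) = 1/\<tau> * ?l2 + \<sigma>/\<tau>"
    by blast+
qed

lemma tendsto_mpow_mat2:
  assumes a: "(a \<longlongrightarrow> a0) F" and b: "(b \<longlongrightarrow> b0) F" and d: "(d \<longlongrightarrow> d0) F"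
    and pos: "0 < a0" "b0\<^sup>2 < a0*d0" and distinct: "(a0 - d0)\<^sup>2 + 4*b0\<^sup>2 \<noteq> 0"
  shows "((\<lambda>x. mpow (mat2 (a x) (b x) (b x) (d x)) r) \<longlongrightarrow> mpow (mat2 a0 b0 b0 d0) r) F"
proof -
  define l1 where "l1 x = eig_max (a x + d x) (a x * d x - (b x)\<^sup>2)" for x
  define l2 where "l2 x = eig_min (a x + d x) (a x * d x - (b x)\<^sup>2)" for x
  define l10 where "l10 = eig_max (a0 + d0) (a0*d0 - b0\<^sup>2)"
  define l20 where "l20 = eig_min (a0 + d0) (a0*d0 - b0\<^sup>2)"
  have "(l1 \<longlongrightarrow> l10) F" "(l2 \<longlongrightarrow> l20) F"
    unfolding l1_def l2_def l10_def l20_def eig_max_def eig_min_def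
    by (auto intro!: tendsto_intros a b d)
  moreover have "0 < l20" "l20 \<le> l10"
    unfolding l10_def l20_def using eig_mat2_pos[OF pos] by auto
  moreover have "l10 - l20 \<noteq> 0"
    using distinct unfolding l10_def l20_def eig_max_def eig_min_def sym_discriminant by simp
  ultimately have lim: "((\<lambda>x. chord_slope r (l1 x) (l2 x) *\<^sub>R mat2 (a x) (b x) (b x) (d x)
      + chord_icept r (l1 x) (l2 x) *\<^sub>R mat 1) \<longlongrightarrow> mpow (mat2 a0 b0 b0 d0) r) F"
    unfolding mpow_mat2_interp[OF pos distinct] chord_slope_def chord_icept_def l10_def[symmetric] l20_def[symmetric]
    by (intro tendsto_intros tendsto_mat2 a b d) auto
  have ev: "\<forall>\<^sub>F x in F. 0 < a x \<and> (b x)\<^sup>2 < a x * d x \<and> (a x - d x)\<^sup>2 + 4*(b x)\<^sup>2 \<noteq> 0"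
  proof -
    have det: "((\<lambda>x. a x * d x - (b x)\<^sup>2) \<longlongrightarrow> a0*d0 - b0\<^sup>2) F"
      and disc: "((\<lambda>x. (a x - d x)\<^sup>2 + 4*(b x)\<^sup>2) \<longlongrightarrow> (a0 - d0)\<^sup>2 + 4*b0\<^sup>2) F"
      by (intro tendsto_intros a b d)+
    have "\<forall>\<^sub>F x in F. 0 < a x" "\<forall>\<^sub>F x in F. 0 < a x * d x - (b x)\<^sup>2"
      using pos by (intro order_tendstoD(1)[OF a] order_tendstoD(1)[OF det]; simp)+
    moreover have "\<forall>\<^sub>F x in F. (a x - d x)\<^sup>2 + 4*(b x)\<^sup>2 \<noteq> 0"
      using tendsto_imp_eventually_ne[OF disc distinct] .
    ultimately show ?thesis
      by eventually_elim simp
  qed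
  show ?thesis
  proof (rule Lim_transform_eventually[OF lim])
    show "\<forall>\<^sub>F x in F. chord_slope r (l1 x) (l2 x) *\<^sub>R mat2 (a x) (b x) (b x) (d x)
        + chord_icept r (l1 x) (l2 x) *\<^sub>R mat 1 = mpow (mat2 (a x) (b x) (b x) (d x)) r"
      using ev by eventually_elim (simp add: mpow_mat2_interp l1_def l2_def)
  qed
qed

lemma tendsto_eig_powr_sum_singular:
  assumes T: "(T \<longlongrightarrow> T0) F" and D: "(D \<longlongrightarrow> 0) F" and "0 < T0" "0 < r"
    and D_nonneg: "\<forall>\<^sub>F x in F. 0 \<le> D x"
  shows "((\<lambda>x. eig_powr_sum (T x) (D x) r) \<longlongrightarrow> T0 powr r) F"
proof -
  have "((\<lambda>x. (T x)\<^sup>2 - 4 * D x) \<longlongrightarrow> T0\<^sup>2 - 4*0) F"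
    by (intro tendsto_intros T D)
  then have "\<forall>\<^sub>F x in F. 0 < (T x)\<^sup>2 - 4 * D x"
    by (rule order_tendstoD(1)) (use \<open>0 < T0\<close> in simp)
  moreover have "\<forall>\<^sub>F x in F. 0 < T x"
    using order_tendstoD(1)[OF T \<open>0 < T0\<close>] .
  ultimately have "\<forall>\<^sub>F x in F. 0 \<le> eig_min (T x) (D x) \<and> 0 \<le> eig_max (T x) (D x)"
    using D_nonneg
  proof eventually_elim
    case (elim x)
    then have "sqrt ((T x)\<^sup>2 - 4 * D x) \<le> sqrt ((T x)\<^sup>2)"
      by (intro real_sqrt_le_mono) simp
    with elim show ?case
      by (simp add: eig_min_def eig_max_def)
  qed
  moreover have "((\<lambda>x. eig_max (T x) (D x)) \<longlongrightarrow> eig_max T0 0) F"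
    unfolding eig_max_def by (intro tendsto_intros T D) simp
  moreover have "((\<lambda>x. eig_min (T x) (D x)) \<longlongrightarrow> eig_min T0 0) F"
    unfolding eig_min_def by (intro tendsto_intros T D) simp
  moreover have "eig_max T0 0 = T0" "eig_min T0 0 = 0"
    using \<open>0 < T0\<close> by (simp_all add: eig_max_def eig_min_def)
  ultimately show ?thesis
    unfolding eig_powr_sum_def using \<open>0 < r\<close>
    by (auto intro!: tendsto_eq_intros tendsto_powr' elim: eventually_mono)
qed

section \<open>The test pair \<open>diag(1, E)\<close>, \<open>R diag(1, E) R\<^sup>T\<close>\<close>

definition rot_diag :: "real \<Rightarrow> real \<Rightarrow> real \<Rightarrow> complex^2^2" where
  "rot_diag c s E = rot c s ** rdiag (diag2 1 E) ** cadj (rot c s)"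

lemma rot_diag_eq:
  "rot_diag c s E = mat2 (c\<^sup>2 + s\<^sup>2*E) (c * s * (1 - E)) (c * s * (1 - E)) (s\<^sup>2 + c\<^sup>2*E)"
  by (simp add: rot_diag_def rot_conj_diag2)

lemma mpow_rot_diag:
  "c\<^sup>2 + s\<^sup>2 = 1 \<Longrightarrow> 0 < E \<Longrightarrow> mpow (rot_diag c s E) r = rot_diag c s (E powr r)"
  unfolding rot_diag_def by (simp add: mpow_rot_conj_diag2)

lemma mpow_diag2: "0 < E \<Longrightarrow> mpow (mat2 1 0 0 E) r = mat2 1 0 0 (E powr r)"
  using mpow_rot_diag[of 1 0 E r] by (simp add: rot_diag_eq)

lemma rot_diag_det:
  fixes c s E :: real
  shows "(c\<^sup>2 + s\<^sup>2*E) * (s\<^sup>2 + c\<^sup>2*E) - (c * s * (1 - E))\<^sup>2 = E * (c\<^sup>2 + s\<^sup>2)\<^sup>2"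
  by (simp add: power2_eq_square algebra_simps)

lemma rot_diag_11_pos: "(c::real)\<^sup>2 + s\<^sup>2 = 1 \<Longrightarrow> 0 < E \<Longrightarrow> 0 < c\<^sup>2 + s\<^sup>2*E"
  by (cases "c = 0") (simp_all add: add_pos_nonneg)

lemma posdef_rot_diag:
  assumes "c\<^sup>2 + s\<^sup>2 = 1" "0 < E"
  shows "posdef (rot_diag c s E)"
  unfolding rot_diag_eq
proof (rule posdef_mat2)
  show "0 < c\<^sup>2 + s\<^sup>2*E"
    using assms by (rule rot_diag_11_pos)
  show "(c * s * (1 - E))\<^sup>2 < (c\<^sup>2 + s\<^sup>2*E) * (s\<^sup>2 + c\<^sup>2*E)"
    using rot_diag_det[of c s E] assms by simp
qed

lemma matrix_inv_diag2: "E \<noteq> 0 \<Longrightarrow> matrix_inv (mat2 1 0 0 E) = mat2 1 0 0 (1/E)"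
  by (rule matrix_inv_eqI) (simp_all add: mat_1_eq_mat2)

text \<open>Conjugating \<open>B\<close> by \<open>diag(1, sqrt E)\<close> gives a matrix of determinant \<open>E\<^sup>2\<close>, whose square
  root is then explicit.\<close>
lemma gmean_inv_diag2:
  assumes a: "0 < a" and det: "a*d - b\<^sup>2 = E" and E: "0 < E"
  defines "\<tau> \<equiv> sqrt (a + E*d + 2*E)"
  shows "gmean (matrix_inv (mat2 1 0 0 E)) (mat2 a b b d) = (1/\<tau>) *\<^sub>R mat2 (a + E) b b (d + 1)"
proof -
  define h where "h = sqrt E"
  have h: "0 < h" "h * h = E"
    using E by (simp_all add: h_def)
  have inv: "matrix_inv (mat2 1 0 0 E) = mat2 1 0 0 (1/E)"
    using E by (simp add: matrix_inv_diag2)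
  have half: "mpow (matrix_inv (mat2 1 0 0 E)) (1/2) = mat2 1 0 0 (1/h)"
    using E by (simp add: inv mpow_diag2 h_def powr_half_sqrt real_sqrt_divide)
  have "(1/E) powr (-1/2) = h"
    using E by (simp add: h_def powr_minus_divide powr_divide powr_half_sqrt)
  then have neg_half: "mpow (matrix_inv (mat2 1 0 0 E)) (-1/2) = mat2 1 0 0 h"
    using E by (simp add: inv mpow_diag2)
  have Z: "mat2 1 0 0 h ** mat2 a b b d ** mat2 1 0 0 h = mat2 a (h*b) (h*b) (E*d)"
    by (simp add: h(2)[symmetric] algebra_simps)
  have "a*(E*d) - (h*b)\<^sup>2 = E*(a*d - b\<^sup>2)"
    by (simp add: h(2)[symmetric] power2_eq_square algebra_simps)
  then have Z_det: "a*(E*d) - (h*b)\<^sup>2 = E*E"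
    using det by simp
  then have Z_pos: "(h*b)\<^sup>2 < a*(E*d)"
    using E by (simp add: algebra_simps)
  have \<sigma>: "sqrt (a*(E*d) - (h*b)\<^sup>2) = E"
    using E by (simp add: Z_det)
  have "mpow (mat2 a (h*b) (h*b) (E*d)) (1/2) = (1/\<tau>) *\<^sub>R mat2 a (h*b) (h*b) (E*d) + (E/\<tau>) *\<^sub>R mat 1"
    using mpow_mat2_sqrt[OF a Z_pos] unfolding \<sigma> \<tau>_def[symmetric] .
  also have "\<dots> = mat2 ((a + E)/\<tau>) (h*(b/\<tau>)) (h*(b/\<tau>)) (E*((d + 1)/\<tau>))"
    by (simp add: mat_1_eq_mat2 add_divide_distrib algebra_simps)
  finally have Z_sqrt: "mpow (mat2 a (h*b) (h*b) (E*d)) (1/2) =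
      mat2 ((a + E)/\<tau>) (h*(b/\<tau>)) (h*(b/\<tau>)) (E*((d + 1)/\<tau>))" .
  have conj: "mat2 1 0 0 (1/h) ** mat2 x (h*y) (h*y) (E*z) ** mat2 1 0 0 (1/h) = mat2 x y y z" for x y z
    using h by (simp add: h(2)[symmetric])
  show ?thesis
    unfolding gmean_def half neg_half Z Z_sqrt conj by simp
qed

lemma gmean_inv_diag2_det:
  assumes a: "0 < a" and det: "a*d - b\<^sup>2 = E" and E: "0 < E"
  defines "\<tau> \<equiv> sqrt (a + E*d + 2*E)"
  shows "0 < (a + E)/\<tau>" "((a + E)/\<tau>) * ((d + 1)/\<tau>) - (b/\<tau>)\<^sup>2 = 1"
proof -
  have "0 < a*d"
    using det E by (smt (verit) zero_le_power2)
  then have "0 < d"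
    using a by (simp add: zero_less_mult_iff)
  have "(a + E)*(d + 1) - b\<^sup>2 = (a*d - b\<^sup>2) + a + E*d + E"
    by (simp add: algebra_simps)
  also have "\<dots> = a + E*d + 2*E"
    unfolding det by simp
  finally have "(a + E)*(d + 1) - b\<^sup>2 = a + E*d + 2*E" .
  moreover have "0 < a + E*d + 2*E"
    using a E \<open>0 < d\<close> by (simp add: add_pos_pos)
  ultimately have \<tau>: "0 < \<tau>" "\<tau>\<^sup>2 = (a + E)*(d + 1) - b\<^sup>2"
    by (simp_all add: \<tau>_def)
  then show "0 < (a + E)/\<tau>"
    using a E by simp
  have "((a + E)/\<tau>) * ((d + 1)/\<tau>) - (b/\<tau>)\<^sup>2 = ((a + E)*(d + 1) - b\<^sup>2)/\<tau>\<^sup>2"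
    by (simp add: power2_eq_square diff_divide_distrib)
  also have "\<dots> = 1"
    unfolding \<tau>(2)[symmetric] using \<tau>(1) by simp
  finally show "((a + E)/\<tau>) * ((d + 1)/\<tau>) - (b/\<tau>)\<^sup>2 = 1" .
qed

lemma trace_mpow_congruence_diag2:
  assumes "0 < k1" "k1*k3 - k2\<^sup>2 \<noteq> 0" "0 < E"
  shows "Re (trace (mpow (mat2 k1 k2 k2 k3 ** mat2 1 0 0 E ** mat2 k1 k2 k2 k3) r)) =
     eig_powr_sum (k1\<^sup>2 + k2\<^sup>2 + E*(k2\<^sup>2 + k3\<^sup>2)) (E*(k1*k3 - k2\<^sup>2)\<^sup>2) r"
proof -
  have N: "mat2 k1 k2 k2 k3 ** mat2 1 0 0 E ** mat2 k1 k2 k2 k3 =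
      mat2 (k1\<^sup>2 + E*k2\<^sup>2) (k1*k2 + E*k2*k3) (k1*k2 + E*k2*k3) (k2\<^sup>2 + E*k3\<^sup>2)"
    by (simp add: power2_eq_square algebra_simps)
  have det: "(k1\<^sup>2 + E*k2\<^sup>2) * (k2\<^sup>2 + E*k3\<^sup>2) - (k1*k2 + E*k2*k3)\<^sup>2 = E*(k1*k3 - k2\<^sup>2)\<^sup>2"
    by (simp add: power2_eq_square algebra_simps)
  have "0 < E*(k1*k3 - k2\<^sup>2)\<^sup>2"
    using assms by simp
  then have pos: "0 < k1\<^sup>2 + E*k2\<^sup>2" "(k1*k2 + E*k2*k3)\<^sup>2 < (k1\<^sup>2 + E*k2\<^sup>2) * (k2\<^sup>2 + E*k3\<^sup>2)"
    using assms det by (simp add: add_pos_nonneg, linarith)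
  then show ?thesis
    unfolding N trace_mpow_mat2[OF pos] det by (simp add: algebra_simps)
qed

text \<open>\<open>A\<^sup>-\<^sup>1 # B\<close> has determinant 1, hence so has \<open>K = (A\<^sup>-\<^sup>1 # B)\<^sup>\<alpha>\<close>; then \<open>K A K\<close> has
  determinant \<open>E\<close> and trace \<open>(K\<^sup>2)\<^sub>1\<^sub>1 + E (K\<^sup>2)\<^sub>2\<^sub>2\<close>.\<close>
lemma trace_mpow_Falpha_diag2:
  assumes a: "0 < a" and det: "a*d - b\<^sup>2 = E" and E: "0 < E"
  defines "G \<equiv> gmean (matrix_inv (mat2 1 0 0 E)) (mat2 a b b d)"
  shows "Re (trace (mpow (Falpha \<alpha> (mat2 1 0 0 E) (mat2 a b b d)) r)) =
     eig_powr_sum (Re (mpow G (2*\<alpha>) $ 1 $ 1) + E * Re (mpow G (2*\<alpha>) $ 2 $ 2)) E r"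
proof -
  define \<tau> where "\<tau> = sqrt (a + E*d + 2*E)"
  have G: "G = mat2 ((a + E)/\<tau>) (b/\<tau>) (b/\<tau>) ((d + 1)/\<tau>)"
    unfolding G_def gmean_inv_diag2[OF a det E] \<tau>_def by simp
  note g = gmean_inv_diag2_det[OF a det E, folded \<tau>_def]
  then have g_pos: "(b/\<tau>)\<^sup>2 < ((a + E)/\<tau>) * ((d + 1)/\<tau>)"
    by simp
  obtain k1 k2 k3 where K: "mpow G \<alpha> = mat2 k1 k2 k2 k3" "0 < k1"
    and "k1*k3 - k2\<^sup>2 = (((a + E)/\<tau>) * ((d + 1)/\<tau>) - (b/\<tau>)\<^sup>2) powr \<alpha>"
    unfolding G by (rule mpow_mat2_entries[OF g(1) g_pos])
  then have K_det: "k1*k3 - k2\<^sup>2 = 1"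
    unfolding g(2) by simp
  have "mpow G (2*\<alpha>) = mpow G \<alpha> ** mpow G \<alpha>"
    unfolding G mpow_mult_mpow_mat2[OF g(1) g_pos] by simp
  then have KK: "Re (mpow G (2*\<alpha>) $ 1 $ 1) = k1\<^sup>2 + k2\<^sup>2" "Re (mpow G (2*\<alpha>) $ 2 $ 2) = k2\<^sup>2 + k3\<^sup>2"
    by (simp_all add: K power2_eq_square)
  have "Falpha \<alpha> (mat2 1 0 0 E) (mat2 a b b d) = mat2 k1 k2 k2 k3 ** mat2 1 0 0 E ** mat2 k1 k2 k2 k3"
    unfolding Falpha_def G_def[symmetric] K(1) ..
  then show ?thesis
    using trace_mpow_congruence_diag2[OF K(2) _ E, of k3 k2 r] K_det unfolding KK by simp
qed

lemma gmean_inv_diag2_rot_diag: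
  assumes cs: "c\<^sup>2 + s\<^sup>2 = 1" and E: "0 < E"
  shows "gmean (matrix_inv (mat2 1 0 0 E)) (rot_diag c s E) =
    (1 / sqrt (c\<^sup>2 + s\<^sup>2*E + E*(s\<^sup>2 + c\<^sup>2*E) + 2*E)) *\<^sub>R
      mat2 (c\<^sup>2 + s\<^sup>2*E + E) (c * s * (1 - E)) (c * s * (1 - E)) (s\<^sup>2 + c\<^sup>2*E + 1)"
  unfolding rot_diag_eq
  by (rule gmean_inv_diag2[OF rot_diag_11_pos[OF cs E] _ E]) (use rot_diag_det[of c s E] cs in simp)

lemma trace_mpow_Falpha_rot_diag:
  assumes cs: "c\<^sup>2 + s\<^sup>2 = 1" and E: "0 < E"
  defines "G \<equiv> gmean (matrix_inv (mat2 1 0 0 E)) (rot_diag c s E)"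
  shows "Re (trace (mpow (Falpha \<alpha> (mat2 1 0 0 E) (rot_diag c s E)) r)) =
     eig_powr_sum (Re (mpow G (2*\<alpha>) $ 1 $ 1) + E * Re (mpow G (2*\<alpha>) $ 2 $ 2)) E r"
  unfolding G_def rot_diag_eq
  by (rule trace_mpow_Falpha_diag2[OF rot_diag_11_pos[OF cs E] _ E]) (use rot_diag_det[of c s E] cs in simp)

lemma tendsto_mpow_gmean_rot_diag:
  assumes cs: "c\<^sup>2 + s\<^sup>2 = 1" and c: "0 < c" and s: "s \<noteq> 0"
  shows "((\<lambda>E. mpow (gmean (matrix_inv (mat2 1 0 0 E)) (rot_diag c s E)) r)
     \<longlongrightarrow> mpow (mat2 c s s ((s\<^sup>2 + 1)/c)) r) (at_right 0)"
proof -
  define \<tau> where "\<tau> E = sqrt (c\<^sup>2 + s\<^sup>2*E + E*(s\<^sup>2 + c\<^sup>2*E) + 2*E)" for E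
  have E0: "((\<lambda>E. E) \<longlongrightarrow> 0) (at_right (0::real))"
    by (rule tendsto_ident_at)
  have "(\<tau> \<longlongrightarrow> sqrt (c\<^sup>2 + s\<^sup>2*0 + 0*(s\<^sup>2 + c\<^sup>2*0) + 2*0)) (at_right 0)"
    unfolding \<tau>_def by (intro tendsto_intros E0)
  then have \<tau>0: "(\<tau> \<longlongrightarrow> c) (at_right 0)"
    using c by simp
  have "((\<lambda>E. (c\<^sup>2 + s\<^sup>2*E + E)/\<tau> E) \<longlongrightarrow> (c\<^sup>2 + s\<^sup>2*0 + 0)/c) (at_right 0)"
    "((\<lambda>E. c * s * (1 - E)/\<tau> E) \<longlongrightarrow> c * s * (1 - 0)/c) (at_right 0)"
    "((\<lambda>E. (s\<^sup>2 + c\<^sup>2*E + 1)/\<tau> E) \<longlongrightarrow> (s\<^sup>2 + c\<^sup>2*0 + 1)/c) (at_right 0)"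
    using c by (intro tendsto_intros E0 \<tau>0; simp)+
  moreover have "s\<^sup>2 < c * ((s\<^sup>2 + 1)/c)"
    using c by simp
  moreover have "0 < (c - (s\<^sup>2 + 1)/c)\<^sup>2 + 4 * s\<^sup>2"
    using s by (intro add_nonneg_pos) simp_all
  ultimately have "((\<lambda>E. mpow (mat2 ((c\<^sup>2 + s\<^sup>2*E + E)/\<tau> E) (c * s * (1 - E)/\<tau> E)
      (c * s * (1 - E)/\<tau> E) ((s\<^sup>2 + c\<^sup>2*E + 1)/\<tau> E)) r)
      \<longlongrightarrow> mpow (mat2 c s s ((s\<^sup>2 + 1)/c)) r) (at_right 0)"
    using c by (intro tendsto_mpow_mat2) (simp_all add: power2_eq_square)
  moreover have "\<forall>\<^sub>F E in at_right 0. mpow (mat2 ((c\<^sup>2 + s\<^sup>2*E + E)/\<tau> E) (c * s * (1 - E)/\<tau> E)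
      (c * s * (1 - E)/\<tau> E) ((s\<^sup>2 + c\<^sup>2*E + 1)/\<tau> E)) r =
      mpow (gmean (matrix_inv (mat2 1 0 0 E)) (rot_diag c s E)) r"
    using eventually_at_right_less[of 0]
    by eventually_elim (simp add: gmean_inv_diag2_rot_diag[OF cs] \<tau>_def)
  ultimately show ?thesis
    by (rule Lim_transform_eventually)
qed

lemma tendsto_trace_mpow_Falpha_rot_diag:
  assumes cs: "c\<^sup>2 + s\<^sup>2 = 1" and c: "0 < c" and s: "s \<noteq> 0" and p: "0 < p"
  shows "((\<lambda>E. Re (trace (mpow (Falpha \<alpha> (mat2 1 0 0 E) (rot_diag c s E)) (1/p))))
     \<longlongrightarrow> Re (mpow (mat2 c s s ((s\<^sup>2 + 1)/c)) (2*\<alpha>) $ 1 $ 1) powr (1/p)) (at_right 0)"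
proof -
  define M where "M E = mpow (gmean (matrix_inv (mat2 1 0 0 E)) (rot_diag c s E)) (2*\<alpha>)" for E
  define M0 where "M0 = mpow (mat2 c s s ((s\<^sup>2 + 1)/c)) (2*\<alpha>)"
  have "(M \<longlongrightarrow> M0) (at_right 0)"
    unfolding M_def M0_def by (rule tendsto_mpow_gmean_rot_diag[OF cs c s])
  then have "((\<lambda>E. Re (M E $ 1 $ 1) + E * Re (M E $ 2 $ 2)) \<longlongrightarrow> Re (M0 $ 1 $ 1) + 0 * Re (M0 $ 2 $ 2))
      (at_right 0)"
    by (intro tendsto_intros tendsto_ident_at)
  moreover have "0 < Re (M0 $ 1 $ 1)"
    using mpow_mat2_entries[of c s "(s\<^sup>2 + 1)/c" "2*\<alpha>"] c unfolding M0_def by force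
  ultimately have "((\<lambda>E. eig_powr_sum (Re (M E $ 1 $ 1) + E * Re (M E $ 2 $ 2)) E (1/p))
      \<longlongrightarrow> Re (M0 $ 1 $ 1) powr (1/p)) (at_right 0)"
    using p by (intro tendsto_eig_powr_sum_singular tendsto_ident_at)
      (auto simp: eventually_at_right_less eventually_at_right_field)
  moreover have "\<forall>\<^sub>F E in at_right 0. eig_powr_sum (Re (M E $ 1 $ 1) + E * Re (M E $ 2 $ 2)) E (1/p) =
      Re (trace (mpow (Falpha \<alpha> (mat2 1 0 0 E) (rot_diag c s E)) (1/p)))"
    using eventually_at_right_less[of 0]
    by eventually_elim (simp add: trace_mpow_Falpha_rot_diag[OF cs] M_def)
  ultimately show ?thesis
    unfolding M0_def by (rule Lim_transform_eventually)
qed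

lemma tendsto_trace_mpow_mean_rot_diag:
  assumes cs: "c\<^sup>2 + s\<^sup>2 = 1" and c: "c \<noteq> 0" and s: "s \<noteq> 0" and \<alpha>: "0 < \<alpha>" "\<alpha> < 1"
  shows "((\<lambda>E. Re (trace (mpow ((1 - \<alpha>) *\<^sub>R mat2 1 0 0 E + \<alpha> *\<^sub>R rot_diag c s E) r)))
     \<longlongrightarrow> eig_powr_sum 1 (\<alpha>*(1 - \<alpha>) * s\<^sup>2) r) (at_right 0)"
proof -
  define a0 where "a0 = 1 - \<alpha> + \<alpha>*c\<^sup>2"
  have M: "(1 - \<alpha>) *\<^sub>R mat2 1 0 0 E + \<alpha> *\<^sub>R rot_diag c s E =
      mat2 (1 - \<alpha> + \<alpha>*(c\<^sup>2 + s\<^sup>2*E)) (\<alpha>*(c * s * (1 - E))) (\<alpha>*(c * s * (1 - E)))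
        ((1 - \<alpha>)*E + \<alpha>*(s\<^sup>2 + c\<^sup>2*E))" for E
    by (simp add: rot_diag_eq)
  have a0: "0 < a0"
    using \<alpha> by (simp add: a0_def add_pos_nonneg)
  have det: "a0*(\<alpha> * s\<^sup>2) - (\<alpha>*(c * s))\<^sup>2 = \<alpha>*(1 - \<alpha>) * s\<^sup>2"
    by (simp add: a0_def power2_eq_square algebra_simps)
  moreover have "0 < \<alpha>*(1 - \<alpha>) * s\<^sup>2"
    using \<alpha> s by simp
  ultimately have pos: "(\<alpha>*(c * s))\<^sup>2 < a0*(\<alpha> * s\<^sup>2)"
    by linarith
  have "0 < (a0 - \<alpha> * s\<^sup>2)\<^sup>2 + 4 * (\<alpha>*(c * s))\<^sup>2"
    using \<alpha> c s by (intro add_nonneg_pos) simp_all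
  moreover have "((\<lambda>E. 1 - \<alpha> + \<alpha>*(c\<^sup>2 + s\<^sup>2*E)) \<longlongrightarrow> a0) (at_right 0)"
    "((\<lambda>E. \<alpha>*(c * s * (1 - E))) \<longlongrightarrow> \<alpha>*(c * s)) (at_right 0)"
    "((\<lambda>E. (1 - \<alpha>)*E + \<alpha>*(s\<^sup>2 + c\<^sup>2*E)) \<longlongrightarrow> \<alpha> * s\<^sup>2) (at_right 0)"
    unfolding a0_def by (auto intro!: tendsto_eq_intros)
  ultimately have "((\<lambda>E. mpow ((1 - \<alpha>) *\<^sub>R mat2 1 0 0 E + \<alpha> *\<^sub>R rot_diag c s E) r)
      \<longlongrightarrow> mpow (mat2 a0 (\<alpha>*(c * s)) (\<alpha>*(c * s)) (\<alpha> * s\<^sup>2)) r) (at_right 0)"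
    unfolding M using a0 pos by (intro tendsto_mpow_mat2) simp_all
  then have "((\<lambda>E. Re (trace (mpow ((1 - \<alpha>) *\<^sub>R mat2 1 0 0 E + \<alpha> *\<^sub>R rot_diag c s E) r)))
      \<longlongrightarrow> eig_powr_sum (a0 + \<alpha> * s\<^sup>2) (a0*(\<alpha> * s\<^sup>2) - (\<alpha>*(c * s))\<^sup>2) r) (at_right 0)"
    unfolding trace_mpow_mat2[OF a0 pos, symmetric] by (rule tendsto_Re_trace)
  moreover have "a0 + \<alpha> * s\<^sup>2 = 1"
    using cs by (simp add: a0_def algebra_simps) (metis distrib_left mult.right_neutral)
  ultimately show ?thesis
    unfolding det by simp
qed

lemma chord_exp_pm:
  fixes l r :: real
  shows "chord_slope r (exp l) (exp (-l)) = sinh (r*l) / sinh l"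
    and "chord_icept r (exp l) (exp (-l)) = - sinh ((r - 1)*l) / sinh l"
proof -
  have pw: "exp x powr r = exp (r*x)" for x :: real
    by (simp add: powr_def mult.commute)
  have sinh: "sinh x = (exp x - exp (-x)) / 2" for x :: real
    by (simp add: sinh_def scaleR_conv_of_real)
  have half: "(x/2) / (y/2) = x/y" for x y :: real
    by simp
  show "chord_slope r (exp l) (exp (-l)) = sinh (r*l) / sinh l"
    unfolding chord_slope_def pw sinh half by simp
  have "exp l * exp (r*(-l)) - exp (-l) * exp (r*l) = - (exp ((r - 1)*l) - exp (-((r - 1)*l)))"
    by (simp add: exp_add[symmetric] algebra_simps)
  then show "chord_icept r (exp l) (exp (-l)) = - sinh ((r - 1)*l) / sinh l"
    unfolding chord_icept_def pw sinh minus_divide_left half by simp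
qed

lemma mpow_sech_tanh_entry:
  assumes l: "0 < l"
  shows "Re (mpow (mat2 (1/cosh l) (tanh l) (tanh l) (((tanh l)\<^sup>2 + 1) * cosh l)) r $ 1 $ 1) =
    cosh ((r - 1) * l) / cosh l"
proof -
  let ?c = "1/cosh l" and ?s = "tanh l" and ?d = "((tanh l)\<^sup>2 + 1) * cosh l"
  have ch: "(cosh l)\<^sup>2 = (sinh l)\<^sup>2 + 1"
    by (rule cosh_square_eq)
  have "?d = (sinh l)\<^sup>2 / cosh l + cosh l"
    by (simp add: tanh_def power_divide field_simps power2_eq_square)
  then have "?c + ?d = ((sinh l)\<^sup>2 + 1) / cosh l + cosh l"
    by (simp add: add_divide_distrib)
  then have tr: "?c + ?d = 2 * cosh l"
    unfolding ch[symmetric] by (simp add: power2_eq_square)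
  have det: "?c * ?d - ?s\<^sup>2 = 1"
    by simp
  have "sqrt ((2 * cosh l)\<^sup>2 - 4*1) = 2 * sinh l"
    using ch l by (simp add: power_mult_distrib real_sqrt_mult)
  then have l12: "eig_max (?c + ?d) (?c * ?d - ?s\<^sup>2) = exp l" "eig_min (?c + ?d) (?c * ?d - ?s\<^sup>2) = exp (-l)"
    unfolding tr det eig_max_def eig_min_def
    by (simp_all add: cosh_plus_sinh[symmetric] cosh_minus_sinh[symmetric])
  have pos: "0 < ?c" "?s\<^sup>2 < ?c * ?d"
    using det by simp_all
  have "0 < (?c - ?d)\<^sup>2 + 4 * ?s\<^sup>2"
    using l by (intro add_nonneg_pos) simp_all
  then have "mpow (mat2 ?c ?s ?s ?d) r =
      chord_slope r (exp l) (exp (-l)) *\<^sub>R mat2 ?c ?s ?s ?d + chord_icept r (exp l) (exp (-l)) *\<^sub>R mat 1"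
    using mpow_mat2_interp[OF pos] unfolding l12 by simp
  then have "Re (mpow (mat2 ?c ?s ?s ?d) r $ 1 $ 1) = chord_slope r (exp l) (exp (-l)) * ?c + chord_icept r (exp l) (exp (-l))"
    by (simp add: mat_1_eq_mat2)
  also have "\<dots> = (sinh (r*l) - cosh l * sinh ((r - 1)*l)) / (sinh l * cosh l)"
    using l by (simp add: chord_exp_pm field_simps)
  also have "sinh (r*l) = sinh ((r - 1)*l) * cosh l + cosh ((r - 1)*l) * sinh l"
    using sinh_add[of "(r - 1)*l" l] by (simp add: algebra_simps)
  finally show ?thesis
    using l by (simp add: field_simps)
qed

section \<open>Comparison to second order\<close>

lemma filterlim_powr_at_right_0:
  fixes p :: real
  assumes "0 < p"
  shows "filterlim (\<lambda>x. x powr p) (at_right 0) (at_right 0)"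
proof (rule tendsto_imp_filterlim_at_right)
  show "((\<lambda>x. x powr p) \<longlongrightarrow> 0) (at_right 0)"
    using assms by real_asymp
  show "\<forall>\<^sub>F x in at_right 0. 0 < x powr p"
    using eventually_at_right_less[of 0] by eventually_elim simp
qed

text \<open>Both sides are \<open>1 + O(l\<^sup>2)\<close>, with \<open>l\<^sup>2\<close>-coefficients \<open>-2\<alpha>(1-\<alpha>)/p\<close> and \<open>-\<alpha>(1-\<alpha>)/q\<close>; for
  \<open>q < 1\<close> the smaller eigenvalue contributes only \<open>O(l\<^sup>2\<^sup>/\<^sup>q) = o(l\<^sup>2)\<close>.\<close>
lemma exponent_bound_of_cosh_ratio_le:
  fixes \<alpha> p q :: real
  assumes \<alpha>: "0 < \<alpha>" "\<alpha> < 1" and p: "0 < p" and q: "0 < q" "q < 1"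
    and le: "\<And>l. 0 < l \<Longrightarrow>
      (cosh ((2*\<alpha> - 1) * l) / cosh l) powr (1/p) \<le> eig_powr_sum 1 (\<alpha>*(1 - \<alpha>) * (tanh l)\<^sup>2) (1/q)"
  shows "p \<le> 2*q"
proof -
  define k where "k = \<alpha>*(1 - \<alpha>)"
  have k: "0 < k"
    using \<alpha> by (simp add: k_def)
  define r where "r = 1/q"
  have r: "1 < r"
    using q by (simp add: r_def)
  have lhs: "((\<lambda>l. ((cosh ((2*\<alpha> - 1) * l) / cosh l) powr (1/p) - 1) / l\<^sup>2)
      \<longlongrightarrow> -2*k/p) (at_right 0)"
    using p unfolding cosh_def k_def
    by (simp add: scaleR_conv_of_real) (real_asymp, simp add: field_simps power2_eq_square)
  have rhs: "((\<lambda>l. (eig_powr_sum 1 (k * (tanh l)\<^sup>2) r - 1) / l\<^sup>2) \<longlongrightarrow> -r*k) (at_right 0)"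
    using r k unfolding eig_powr_sum_def eig_max_def eig_min_def tanh_real_altdef
    by (simp only: power_one) real_asymp
  have ev: "\<forall>\<^sub>F l in at_right 0. ((cosh ((2*\<alpha> - 1) * l) / cosh l) powr (1/p) - 1) / l\<^sup>2 \<le>
      (eig_powr_sum 1 (k * (tanh l)\<^sup>2) r - 1) / l\<^sup>2"
    using eventually_at_right_less[of 0]
    by eventually_elim (use le in \<open>simp add: k_def r_def divide_right_mono\<close>)
  have "-2*k/p \<le> -r*k"
    using tendsto_le[OF _ rhs lhs ev] by simp
  then show ?thesis
    using k p q by (simp add: r_def field_simps)
qed

lemma sech_tanh_circle: "(1 / cosh l)\<^sup>2 + (tanh l)\<^sup>2 = (1::real)"
proof -
  have "0 < (sinh l)\<^sup>2 + 1"
    by (simp add: add_nonneg_pos)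
  then show ?thesis
    using cosh_square_eq[of l] by (simp add: tanh_def power_divide add_divide_distrib[symmetric])
qed

lemma cosh_ratio_powr_le_eig_powr_sum:
  fixes \<alpha> p q l :: real
  assumes \<alpha>: "0 < \<alpha>" "\<alpha> < 1" and p: "0 < p" and q: "0 < q"
    and H: "\<forall>A B :: complex^2^2. posdef A \<and> posdef B \<longrightarrow>
      Re (trace (SG \<alpha> p A B)) \<le> Re (trace (AM \<alpha> q A B))"
    and l: "0 < l"
  shows "(cosh ((2*\<alpha> - 1) * l) / cosh l) powr (1/p) \<le> eig_powr_sum 1 (\<alpha>*(1 - \<alpha>) * (tanh l)\<^sup>2) (1/q)"
proof -
  define c where "c = 1 / cosh l"
  define s where "s = tanh l"
  have cs: "c\<^sup>2 + s\<^sup>2 = 1"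
    unfolding c_def s_def by (rule sech_tanh_circle)
  have c: "0 < c" and s: "s \<noteq> 0"
    using l by (simp_all add: c_def s_def)
  then have c_ne: "c \<noteq> 0"
    by simp
  have SG: "SG \<alpha> p (mat2 1 0 0 e) (rot_diag c s e) =
      mpow (Falpha \<alpha> (mat2 1 0 0 (e powr p)) (rot_diag c s (e powr p))) (1/p)"
    and AM: "AM \<alpha> q (mat2 1 0 0 e) (rot_diag c s e) =
      mpow ((1 - \<alpha>) *\<^sub>R mat2 1 0 0 (e powr q) + \<alpha> *\<^sub>R rot_diag c s (e powr q)) (1/q)"
    if "0 < e" for e
    using that cs by (simp_all add: SG_def AM_def mpow_diag2 mpow_rot_diag)
  have "((\<lambda>e. Re (trace (SG \<alpha> p (mat2 1 0 0 e) (rot_diag c s e))))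
      \<longlongrightarrow> Re (mpow (mat2 c s s ((s\<^sup>2 + 1)/c)) (2*\<alpha>) $ 1 $ 1) powr (1/p)) (at_right 0)"
    using filterlim_compose[OF tendsto_trace_mpow_Falpha_rot_diag[OF cs c s p] filterlim_powr_at_right_0[OF p]]
    by (rule Lim_transform_eventually)
      (use eventually_at_right_less[of 0] in \<open>auto simp: SG elim: eventually_mono\<close>)
  moreover have "Re (mpow (mat2 c s s ((s\<^sup>2 + 1)/c)) (2*\<alpha>) $ 1 $ 1) = cosh ((2*\<alpha> - 1) * l) / cosh l"
    using mpow_sech_tanh_entry[OF l, of "2*\<alpha>"] by (simp add: c_def s_def)
  moreover have "((\<lambda>e. Re (trace (AM \<alpha> q (mat2 1 0 0 e) (rot_diag c s e))))
      \<longlongrightarrow> eig_powr_sum 1 (\<alpha>*(1 - \<alpha>) * s\<^sup>2) (1/q)) (at_right 0)"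
    using filterlim_compose[OF tendsto_trace_mpow_mean_rot_diag[OF cs c_ne s \<alpha>, of "1/q"]
        filterlim_powr_at_right_0[OF q]]
    by (rule Lim_transform_eventually)
      (use eventually_at_right_less[of 0] in \<open>auto simp: AM elim: eventually_mono\<close>)
  moreover have "\<forall>\<^sub>F e in at_right 0. Re (trace (SG \<alpha> p (mat2 1 0 0 e) (rot_diag c s e))) \<le>
      Re (trace (AM \<alpha> q (mat2 1 0 0 e) (rot_diag c s e)))"
    using eventually_at_right_less[of 0]
  proof eventually_elim
    case (elim e)
    have "posdef (mat2 1 0 0 e)" "posdef (rot_diag c s e)"
      using posdef_rot_diag[of 1 0 e] posdef_rot_diag[OF cs elim] elim by (simp_all add: rot_diag_eq)
    then show ?case
      using H by blast
  qed
  ultimately show ?thesis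
    unfolding s_def by (intro tendsto_le[of "at_right 0"]) auto
qed

theorem theorem4p29:
  fixes \<alpha> p q :: real
  assumes "0 < \<alpha>" and "\<alpha> < 1" and "0 < p" and "0 < q"
    and "\<forall>A B :: complex^2^2. posdef A \<and> posdef B \<longrightarrow>
           Re (trace (SG \<alpha> p A B)) \<le> Re (trace (AM \<alpha> q A B))"
  shows "min 1 (p / 2) \<le> q"
proof (cases "q < 1")
  case True
  have "p \<le> 2*q"
    using assms(1-4) True cosh_ratio_powr_le_eig_powr_sum[OF assms]
    by (rule exponent_bound_of_cosh_ratio_le)
  then show ?thesis
    by simp
qed simp

end
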